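(* Let $\Sigma\in\mathbb{R}^{p\times p}$ be positive definite and suppose $\Sigma=(I-B_0)^{-T}\Omega_0(I-B_0)^{-1}$ for some $B_0\in\mathbb{D}$ and $\Omega_0=\omega_0^2I$ with $\omega_0>0$. Then $B_0$ is the unique minimum-trace DAG, i.e. $B_0=\tilde B(\pi_0)$ for every $\pi_0\in\arg\min_\pi\operatorname{tr}\tilde\Omega(\pi)$.
   Context: $\mathbb{D}$ is the set of real $p\times p$ matrices whose directed graph (edge $i\to j$ iff $b_{ij}\ne0$) is acyclic. For a permutation $\pi$ of $[p]$, $(P_\pi A)_{ij}=a_{\pi(i)\pi(j)}$. For each $\pi$, write uniquely $P_\pi\Sigma^{-1}=(I-L)D^{-1}(I-L)^T$ with $L$ strictly lower triangular and $D$ diagonal with positive diagonal, and set $\tilde B(\pi)=P_{\pi^{-1}}L$, $\tilde\Omega(\pi)=P_{\pi^{-1}}D$. A minimum-trace permutation is any $\pi_0\in\arg\min_\pi\operatorname{tr}\tilde\Omega(\pi)$ and $\tilde B(\pi_0)$ is a minimum-trace DAG. *)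

theory Defs
  imports "HOL-Analysis.Analysis"
begin

text \<open>Matrices are p x p real matrices indexed by a finite linearly ordered type 'n
  (p = CARD('n)); the linear order on 'n plays the role of the order on [p].\<close>

definition pos_def_mat :: "real^'n^'n \<Rightarrow> bool" where
  "pos_def_mat S \<longleftrightarrow> transpose S = S \<and> (\<forall>x. x \<noteq> 0 \<longrightarrow> x \<bullet> (S *v x) > 0)"

definition is_dag_mat :: "real^'n^'n \<Rightarrow> bool" where
  "is_dag_mat B \<longleftrightarrow> acyclic {(i, j). B $ i $ j \<noteq> 0}"

definition perm_act :: "('n \<Rightarrow> 'n) \<Rightarrow> real^'n^'n \<Rightarrow> real^'n^'n" where
  "perm_act \<pi> A = (\<chi> i j. A $ (\<pi> i) $ (\<pi> j))"

definition strict_lower :: "real^'n::{finite,linorder}^'n::{finite,linorder} \<Rightarrow> bool" where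
  "strict_lower L \<longleftrightarrow> (\<forall>i j. i \<le> j \<longrightarrow> L $ i $ j = 0)"

definition pos_diag :: "real^'n^'n \<Rightarrow> bool" where
  "pos_diag D \<longleftrightarrow> (\<forall>i j. i \<noteq> j \<longrightarrow> D $ i $ j = 0) \<and> (\<forall>i. D $ i $ i > 0)"

definition ldl_factors :: "real^'n::{finite,linorder}^'n::{finite,linorder} \<Rightarrow> ('n::{finite,linorder} \<Rightarrow> 'n::{finite,linorder}) \<Rightarrow> (real^'n::{finite,linorder}^'n::{finite,linorder}) \<times> (real^'n::{finite,linorder}^'n::{finite,linorder})" where
  "ldl_factors S \<pi> = (THE LD. strict_lower (fst LD) \<and> pos_diag (snd LD) \<and>
     perm_act \<pi> (matrix_inv S) =
       (mat 1 - fst LD) ** matrix_inv (snd LD) ** transpose (mat 1 - fst LD))"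

definition B_tilde :: "real^'n::{finite,linorder}^'n::{finite,linorder} \<Rightarrow> ('n::{finite,linorder} \<Rightarrow> 'n::{finite,linorder}) \<Rightarrow> real^'n::{finite,linorder}^'n::{finite,linorder}" where
  "B_tilde S \<pi> = perm_act (inv \<pi>) (fst (ldl_factors S \<pi>))"

definition Omega_tilde :: "real^'n::{finite,linorder}^'n::{finite,linorder} \<Rightarrow> ('n::{finite,linorder} \<Rightarrow> 'n::{finite,linorder}) \<Rightarrow> real^'n::{finite,linorder}^'n::{finite,linorder}" where
  "Omega_tilde S \<pi> = perm_act (inv \<pi>) (snd (ldl_factors S \<pi>))"

definition min_trace_perm :: "real^'n::{finite,linorder}^'n::{finite,linorder} \<Rightarrow> ('n::{finite,linorder} \<Rightarrow> 'n::{finite,linorder}) \<Rightarrow> bool" where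
  "min_trace_perm S \<pi>0 \<longleftrightarrow> \<pi>0 permutes UNIV \<and>
     (\<forall>\<pi>. \<pi> permutes UNIV \<longrightarrow> trace (Omega_tilde S \<pi>0) \<le> trace (Omega_tilde S \<pi>))"

end

theory Submission
  imports Defs
begin

text \<open>
  For every ordering \<open>\<pi>\<close> the diagonal entries of \<open>\<tilde>\<Omega>(\<pi>)\<close> multiply to \<open>det \<Sigma> = \<omega>\<^sub>0\<^sup>2\<^sup>p\<close>, because
  \<open>I - L\<close> is unit triangular. A topological ordering of \<open>B\<^sub>0\<close> gives \<open>\<tilde>\<Omega> = \<omega>\<^sub>0\<^sup>2 I\<close>, of trace
  \<open>p \<omega>\<^sub>0\<^sup>2\<close>, so by the AM-GM inequality a minimum-trace ordering \<open>\<pi>\<^sub>0\<close> also has \<open>\<tilde>\<Omega>(\<pi>\<^sub>0) = \<omega>\<^sub>0\<^sup>2 I\<close>.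
  Then \<open>(I - L)(I - L)\<^sup>T = N N\<^sup>T\<close> with \<open>L\<close> strictly lower triangular and \<open>N = I - P\<^sub>\<pi>\<^sub>0 B\<^sub>0\<close> of unit
  diagonal; comparing rows in increasing order forces \<open>I - L = N\<close>, that is \<open>\<tilde>B(\<pi>\<^sub>0) = B\<^sub>0\<close>.
\<close>

lemma finite_linorder_induct:
  fixes k :: "'a::{finite,linorder}"
  assumes "\<And>k. (\<And>j. j < k \<Longrightarrow> P j) \<Longrightarrow> P k"
  shows "P k"
proof (induction k rule: measure_induct_rule[where f="\<lambda>k. card {j. j < k}"])
  case (less k)
  show ?case
  proof (rule assms)
    fix j assume "j < k"
    hence "{l. l < j} \<subset> {l. l < k}" by auto
    hence "card {l. l < j} < card {l. l < k}" by (simp add: psubset_card_mono)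
    thus "P j" by (rule less)
  qed
qed

lemma sum_UNIV_split_at:
  fixes f :: "'a::{finite,linorder} \<Rightarrow> 'b::comm_monoid_add"
  shows "sum f UNIV = sum f {j. j < k} + f k + sum f {j. k < j}"
proof -
  have U: "UNIV = ({j. j < k} \<union> {k}) \<union> {j. k < j}" by auto
  show ?thesis by (subst U, subst sum.union_disjoint) (auto simp: sum.union_disjoint add_ac)
qed

lemma sum_UNIV_eq_single:
  fixes f :: "'a::finite \<Rightarrow> 'b::comm_monoid_add"
  assumes "\<And>j. j \<noteq> a \<Longrightarrow> f j = 0"
  shows "sum f UNIV = f a"
proof -
  have "sum f UNIV = f a + sum f (UNIV - {a})" by (simp add: sum.remove)
  also have "sum f (UNIV - {a}) = 0" using assms by (intro sum.neutral) auto
  finally show ?thesis by simp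
qed

lemma exists_permutes_strict_mono_key:
  fixes key :: "'a::{finite,linorder} \<Rightarrow> 'b::linorder"
  obtains \<sigma> where "\<sigma> permutes UNIV" "\<And>a b. key a < key b \<Longrightarrow> \<sigma> a < \<sigma> b"
proof -
  define ys where "ys = sorted_list_of_set (UNIV :: 'a set)"
  define xs where "xs = sort_key key ys"
  have ys: "bij_betw ((!) ys) {..<CARD('a)} UNIV"
    by (rule bij_betw_nth) (simp_all add: ys_def)
  have xs: "bij_betw ((!) xs) {..<CARD('a)} UNIV"
    by (rule bij_betw_nth) (simp_all add: xs_def ys_def)
  \<comment> \<open>the \<open>n\<close>-th element in the order of \<open>key\<close> goes to the \<open>n\<close>-th element in the order of \<open>'a\<close>\<close>
  define \<sigma> where "\<sigma> = (!) ys \<circ> inv_into {..<CARD('a)} ((!) xs)"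
  show thesis
  proof
    show "\<sigma> permutes UNIV"
      unfolding \<sigma>_def by (rule bij_imp_permutes, rule bij_betw_trans[OF bij_betw_inv_into[OF xs] ys]) simp
  next
    fix a b assume key: "key a < key b"
    define i j where "i = inv_into {..<CARD('a)} ((!) xs) a"
      and "j = inv_into {..<CARD('a)} ((!) xs) b"
    have ij: "i < CARD('a)" "j < CARD('a)" "xs ! i = a" "xs ! j = b"
      using bij_betw_apply[OF bij_betw_inv_into[OF xs]] bij_betw_inv_into_right[OF xs]
      by (auto simp: i_def j_def)
    have "i < j"
    proof (rule ccontr)
      assume "\<not> i < j"
      hence "key (xs ! j) \<le> key (xs ! i)"
        using sorted_nth_mono[of "map key xs" j i] ij by (simp add: xs_def ys_def)
      thus False using key ij by simp
    qed
    then show "\<sigma> a < \<sigma> b"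
      using sorted_wrt_nth_less[OF strict_sorted_list_of_set] ij
      by (simp add: \<sigma>_def i_def[symmetric] j_def[symmetric] ys_def)
  qed
qed

lemma acyclic_exists_topological_permutes:
  fixes R :: "('a::{finite,linorder} \<times> 'a) set"
  assumes "acyclic R"
  obtains \<sigma> where "\<sigma> permutes UNIV" "\<And>a b. (a, b) \<in> R \<Longrightarrow> \<sigma> b < \<sigma> a"
proof -
  have key: "card (R\<^sup>+ `` {b}) < card (R\<^sup>+ `` {a})" if "(a, b) \<in> R" for a b
  proof -
    have "b \<in> R\<^sup>+ `` {a} - R\<^sup>+ `` {b}" using that assms by (auto simp: acyclic_def)
    moreover have "R\<^sup>+ `` {b} \<subseteq> R\<^sup>+ `` {a}" using that by (auto intro: trancl_into_trancl2)
    ultimately show ?thesis by (intro psubset_card_mono) auto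
  qed
  show thesis
  proof (rule exists_permutes_strict_mono_key[of "\<lambda>a. card (R\<^sup>+ `` {a})"])
    fix \<sigma> :: "'a \<Rightarrow> 'a"
    assume "\<sigma> permutes UNIV" "\<And>a b. card (R\<^sup>+ `` {a}) < card (R\<^sup>+ `` {b}) \<Longrightarrow> \<sigma> a < \<sigma> b"
    thus thesis using key that by blast
  qed
qed

lemma arith_geom_mean_eq_const:
  fixes e :: "'a::finite \<Rightarrow> real" and c :: real
  assumes e: "\<And>i. e i > 0" and c: "c > 0"
    and prod: "prod e UNIV = c ^ CARD('a)" and sum: "sum e UNIV \<le> CARD('a) * c"
  shows "e i = c"
proof -
  \<comment> \<open>With \<open>x = e / c\<close>: \<open>\<Sum> (x - 1 - ln x) = \<Sum> x - CARD('a) - ln (\<Prod> x) \<le> 0\<close>, and each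
    summand is nonnegative.\<close>
  define x where "x = (\<lambda>i. e i / c)"
  have x: "x i > 0" for i using e c by (simp add: x_def)
  have "prod x UNIV = 1" using prod c by (simp add: x_def prod_dividef)
  moreover have "x i \<noteq> 0" for i using x[of i] by simp
  ultimately have "(\<Sum>i\<in>UNIV. ln (x i)) = 0" using ln_prod[of UNIV x] by simp
  moreover have "sum x UNIV \<le> CARD('a)"
    using sum c by (simp add: x_def flip: sum_divide_distrib) (simp add: divide_le_eq mult.commute)
  ultimately have "(\<Sum>i\<in>UNIV. x i - 1 - ln (x i)) \<le> 0" by (simp add: sum_subtractf)
  moreover have nonneg: "x i - 1 - ln (x i) \<ge> 0" for i using ln_le_minus_one[OF x] by simp
  ultimately have "(\<Sum>i\<in>UNIV. x i - 1 - ln (x i)) = 0" by (simp add: antisym sum_nonneg)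
  hence "x i - 1 - ln (x i) = 0" using sum_nonneg_eq_0_iff[of UNIV "\<lambda>i. x i - 1 - ln (x i)"] nonneg by simp
  hence "x i = 1" using ln_eq_minus_one[OF x] by simp
  thus ?thesis using c by (simp add: x_def)
qed

section \<open>Simultaneous permutation of rows and columns\<close>

lemma perm_act_mult:
  fixes A B :: "real^'n^'n"
  assumes "\<pi> permutes UNIV"
  shows "perm_act \<pi> (A ** B) = perm_act \<pi> A ** perm_act \<pi> B"
proof -
  have "(\<Sum>k\<in>UNIV. A $ \<pi> i $ k * B $ k $ \<pi> j) = (\<Sum>k\<in>UNIV. A $ \<pi> i $ \<pi> k * B $ \<pi> k $ \<pi> j)" for i j
    using sum.permute[OF assms, of "\<lambda>k. A $ \<pi> i $ k * B $ k $ \<pi> j"] by (simp add: comp_def)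
  thus ?thesis by (simp add: perm_act_def matrix_matrix_mult_def vec_eq_iff)
qed

lemma perm_act_mat: "\<pi> permutes UNIV \<Longrightarrow> perm_act \<pi> (mat c) = (mat c :: real^'n^'n)"
  by (auto simp: perm_act_def mat_def vec_eq_iff permutes_inj[THEN inj_eq])

lemma perm_act_transpose: "perm_act \<pi> (transpose A) = transpose (perm_act \<pi> (A::real^'n^'n))"
  by (simp add: perm_act_def transpose_def vec_eq_iff)

lemma perm_act_diff: "perm_act \<pi> (A - B) = perm_act \<pi> A - perm_act \<pi> (B::real^'n^'n)"
  by (simp add: perm_act_def vec_eq_iff)

lemma perm_act_inv_perm_act: "\<pi> permutes UNIV \<Longrightarrow> perm_act (inv \<pi>) (perm_act \<pi> A) = (A::real^'n^'n)"
  by (simp add: perm_act_def vec_eq_iff permutes_inverses)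

lemma perm_act_id_minus_congruence:
  fixes B :: "real^'n^'n"
  assumes "\<pi> permutes UNIV"
  shows "perm_act \<pi> ((mat 1 - B) ** mat a ** transpose (mat 1 - B))
    = (mat 1 - perm_act \<pi> B) ** mat a ** transpose (mat 1 - perm_act \<pi> B)"
  using assms by (simp add: perm_act_mult perm_act_mat perm_act_transpose perm_act_diff)

lemma det_perm_act:
  fixes A :: "real^'n^'n"
  assumes "\<pi> permutes UNIV"
  shows "det (perm_act \<pi> A) = det A"
proof -
  let ?C = "(\<chi> i j. A$i$\<pi> j) :: real^'n^'n"
  have "perm_act \<pi> A = (\<chi> i. ?C $ \<pi> i)" by (simp add: perm_act_def vec_eq_iff)
  hence "det (perm_act \<pi> A) = of_int (sign \<pi>) * det ?C"
    using det_permute_rows[OF assms, of ?C] by metis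
  also have "\<dots> = of_int (sign \<pi>) * (of_int (sign \<pi>) * det A)"
    using det_permute_columns[OF assms] by simp
  also have "\<dots> = of_int (sign \<pi> * sign \<pi>) * det A" by (simp only: of_int_mult mult.assoc)
  finally show ?thesis by simp
qed

lemma trace_perm_act: "\<pi> permutes UNIV \<Longrightarrow> trace (perm_act \<pi> A) = trace (A::real^'n^'n)"
  unfolding trace_def perm_act_def by (simp add: sum.permute[of \<pi> UNIV "\<lambda>k. A $ k $ k"] comp_def)

lemma pos_def_perm_act:
  fixes S :: "real^'n^'n"
  assumes perm: "\<pi> permutes UNIV" and pd: "\<forall>x. x \<noteq> 0 \<longrightarrow> x \<bullet> (S *v x) > 0"
  shows "\<forall>x. x \<noteq> 0 \<longrightarrow> x \<bullet> (perm_act \<pi> S *v x) > 0"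
proof (intro allI impI)
  fix x :: "real^'n" assume "x \<noteq> 0"
  define y :: "real^'n" where "y = (\<chi> a. x $ inv \<pi> a)"
  have xy: "x $ i = y $ \<pi> i" for i by (simp add: y_def permutes_inverses[OF perm])
  hence "y \<noteq> 0" using \<open>x \<noteq> 0\<close> by (auto simp: vec_eq_iff)
  have "x \<bullet> (perm_act \<pi> S *v x) = (\<Sum>i\<in>UNIV. y$(\<pi> i) * (\<Sum>j\<in>UNIV. S$(\<pi> i)$(\<pi> j) * y$(\<pi> j)))"
    by (simp add: inner_vec_def matrix_vector_mult_def perm_act_def xy)
  also have "\<dots> = (\<Sum>i\<in>UNIV. y$(\<pi> i) * (\<Sum>b\<in>UNIV. S$(\<pi> i)$b * y$b))"
    using sum.permute[OF perm, of "\<lambda>b. S$(\<pi> _)$b * y$b"] by (simp add: comp_def)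
  also have "\<dots> = y \<bullet> (S *v y)"
    using sum.permute[OF perm, of "\<lambda>a. y$a * (\<Sum>b\<in>UNIV. S$a$b * y$b)"]
    by (simp add: inner_vec_def matrix_vector_mult_def comp_def)
  finally show "x \<bullet> (perm_act \<pi> S *v x) > 0" using pd \<open>y \<noteq> 0\<close> by simp
qed

definition diagm :: "('n \<Rightarrow> real) \<Rightarrow> real^'n^'n" where
  "diagm e = (\<chi> i j. if i = j then e i else 0)"

lemma mat_eq_diagm: "mat c = diagm (\<lambda>_. c)"
  by (simp add: mat_def diagm_def)

lemma matrix_mul_transpose_nth:
  fixes M N :: "real^'n^'n"
  shows "(M ** transpose N)$i$j = (\<Sum>k\<in>UNIV. M$i$k * N$j$k)"
  by (simp add: matrix_matrix_mult_def transpose_def)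

lemma matrix_mul_diagm_transpose_nth:
  fixes M N :: "real^'n^'n"
  shows "(M ** diagm e ** transpose N)$i$j = (\<Sum>k\<in>UNIV. M$i$k * e k * N$j$k)"
proof -
  have "(M ** diagm e)$i$k = M$i$k * e k" for k
    by (simp add: matrix_matrix_mult_def diagm_def if_distrib cong: if_cong)
  thus ?thesis by (simp add: matrix_mul_transpose_nth)
qed

lemma diagm_mult: "diagm a ** diagm b = diagm (\<lambda>i. a i * b i)"
proof -
  have "(\<Sum>k\<in>UNIV. (if i = k then a i else 0) * (if k = j then b k else 0)) = (if i = j then a i * b i else 0)"
    for i j
    by (subst sum_UNIV_eq_single[where a=i]) auto
  thus ?thesis by (simp add: diagm_def matrix_matrix_mult_def vec_eq_iff)
qed

lemma det_diagm: "det (diagm e) = prod e UNIV"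
  by (subst det_diagonal) (auto simp: diagm_def)

lemma pos_diag_eq_diagm: "pos_diag D \<Longrightarrow> D = diagm (\<lambda>i. D$i$i)"
  by (auto simp: pos_diag_def diagm_def vec_eq_iff)

lemma pos_diag_mult_inverse:
  assumes "pos_diag D"
  shows "D ** diagm (\<lambda>i. 1 / D$i$i) = mat 1"
proof -
  have "D ** diagm (\<lambda>i. 1 / D$i$i) = diagm (\<lambda>_. 1)"
    using assms by (subst pos_diag_eq_diagm[OF assms], subst diagm_mult)
      (auto simp: pos_diag_def intro!: arg_cong[where f=diagm] ext less_imp_neq[symmetric])
  thus ?thesis by (simp add: mat_eq_diagm)
qed

lemma mat_mult_mat: "mat a ** mat b = (mat (a * b) :: real^'n^'n)"
  by (simp add: mat_eq_diagm diagm_mult)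

lemma matrix_mul_mat_transpose: "M ** mat a ** transpose M = a *\<^sub>R (M ** transpose (M :: real^'n^'n))"
proof -
  have "(M ** mat a ** transpose M)$i$j = a * (M ** transpose M)$i$j" for i j
    by (simp only: mat_eq_diagm matrix_mul_diagm_transpose_nth)
      (simp add: matrix_mul_transpose_nth sum_distrib_left mult_ac)
  thus ?thesis by (simp add: vec_eq_iff)
qed

lemma invertible_matrix_inv:
  fixes A :: "real^'n^'n"
  assumes "invertible A"
  shows "A ** matrix_inv A = mat 1" "matrix_inv A ** A = mat 1"
  using someI_ex[OF assms[unfolded invertible_def]] by (simp_all add: matrix_inv_def)

lemma matrix_inv_unique:
  fixes A B :: "real^'n^'n"
  assumes "A ** B = mat 1"
  shows "matrix_inv A = B"
proof -
  have "invertible A"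
    using assms matrix_left_right_inverse unfolding invertible_def by blast
  have "matrix_inv A = matrix_inv A ** (A ** B)" using assms by simp
  also have "\<dots> = (matrix_inv A ** A) ** B" by (simp add: matrix_mul_assoc)
  finally show ?thesis using invertible_matrix_inv(2)[OF \<open>invertible A\<close>] by simp
qed

lemma matrix_inv_mat: "c \<noteq> 0 \<Longrightarrow> matrix_inv (mat c :: real^'n^'n) = mat (1/c)"
  by (rule matrix_inv_unique) (simp add: mat_mult_mat)

lemma matrix_inv_pos_diag: "pos_diag D \<Longrightarrow> matrix_inv D = diagm (\<lambda>i. 1 / D$i$i)"
  by (rule matrix_inv_unique[OF pos_diag_mult_inverse])

lemma perm_act_matrix_inv:
  fixes A :: "real^'n^'n"
  assumes "invertible A" "\<pi> permutes UNIV"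
  shows "perm_act \<pi> (matrix_inv A) = matrix_inv (perm_act \<pi> A)"
  using invertible_matrix_inv(1)[OF assms(1)]
  by (intro matrix_inv_unique[symmetric]) (metis perm_act_mult perm_act_mat assms(2))

lemma invertible_if_pos_def:
  fixes A :: "real^'n^'n"
  assumes "\<forall>x. x \<noteq> 0 \<longrightarrow> x \<bullet> (A *v x) > 0"
  shows "invertible A"
proof -
  have "inj ((*v) A)"
  proof (rule injI)
    fix x y assume "A *v x = A *v y"
    hence "(x - y) \<bullet> (A *v (x - y)) = 0" by (simp add: matrix_vector_mult_diff_distrib)
    thus "x = y" using assms[rule_format, of "x - y"] by auto
  qed
  thus ?thesis using matrix_left_invertible_injective invertible_left_inverse by blast
qed

lemma matrix_inv_congruence:
  fixes Y :: "real^'n^'n"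
  assumes "invertible Y" "c \<noteq> 0"
  shows "matrix_inv (transpose (matrix_inv Y) ** mat c ** matrix_inv Y) = Y ** mat (1/c) ** transpose Y"
proof (rule matrix_inv_unique)
  let ?X = "matrix_inv Y"
  have "transpose ?X ** mat c ** ?X ** (Y ** mat (1/c) ** transpose Y)
      = transpose ?X ** mat c ** (?X ** Y) ** mat (1/c) ** transpose Y"
    by (simp add: matrix_mul_assoc)
  also have "\<dots> = transpose ?X ** (mat c ** mat (1/c)) ** transpose Y"
    by (simp add: invertible_matrix_inv[OF assms(1)] matrix_mul_assoc)
  also have "\<dots> = transpose (Y ** ?X)"
    using assms(2) by (simp add: mat_mult_mat matrix_transpose_mul)
  finally show "transpose ?X ** mat c ** ?X ** (Y ** mat (1/c) ** transpose Y) = mat 1"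
    by (simp add: invertible_matrix_inv[OF assms(1)])
qed

section \<open>Unit lower triangular matrices\<close>

lemma unit_lower_nth:
  fixes L :: "real^'n::{finite,linorder}^'n::{finite,linorder}"
  assumes "strict_lower L"
  shows "(mat 1 - L)$k$k = 1" "k < j \<Longrightarrow> (mat 1 - L)$k$j = 0"
  using assms by (auto simp: strict_lower_def mat_def)

text \<open>The library versions \<open>permutes_natset_le\<close> and \<open>det_lowerdiagonal\<close> of the next two lemmas
  require a wellordered index type.\<close>

lemma permutes_le_imp_id:
  fixes p :: "'a::{finite,linorder} \<Rightarrow> 'a"
  assumes "p permutes UNIV" "\<And>i. p i \<le> i"
  shows "p i = i"
proof (induction i rule: finite_linorder_induct)
  case (1 k)
  show ?case
  proof (rule ccontr)
    assume "p k \<noteq> k"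
    hence "p k < k" using assms(2)[of k] by simp
    hence "p (p k) = p k" using 1 by blast
    hence "p k = k" using permutes_inj[OF assms(1)] by (meson injD)
    thus False using \<open>p k \<noteq> k\<close> by simp
  qed
qed

lemma det_lower_triangular:
  fixes A :: "real^'n::{finite,linorder}^'n::{finite,linorder}"
  assumes "\<And>i j. i < j \<Longrightarrow> A$i$j = 0"
  shows "det A = prod (\<lambda>i. A$i$i) UNIV"
proof -
  have vanish: "\<forall>p \<in> {p. p permutes UNIV} - {id}. of_int (sign p) * prod (\<lambda>i. A$i$p i) UNIV = 0"
  proof
    fix p :: "'n \<Rightarrow> 'n" assume "p \<in> {p. p permutes UNIV} - {id}"
    hence perm: "p permutes UNIV" and "p \<noteq> id" by auto
    then obtain i where "i < p i"
      using permutes_le_imp_id[OF perm] by (metis eq_id_iff not_le)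
    hence "A$i$p i = 0" by (rule assms)
    thus "of_int (sign p) * prod (\<lambda>i. A$i$p i) UNIV = 0" by (auto simp: prod_zero_iff)
  qed
  have "{id} \<subseteq> {p. p permutes UNIV}" by (auto simp: permutes_id)
  from sum.mono_neutral_cong_left[OF finite_permutations[OF finite] this vanish] show ?thesis
    unfolding det_def by (simp add: sign_id)
qed

lemma det_unit_lower:
  fixes L :: "real^'n::{finite,linorder}^'n::{finite,linorder}"
  assumes "strict_lower L"
  shows "det (mat 1 - L) = 1"
proof -
  have "det (mat 1 - L) = (\<Prod>i\<in>UNIV. (mat 1 - L)$i$i)"
    by (rule det_lower_triangular) (rule unit_lower_nth(2)[OF assms])
  also have "\<dots> = 1" using unit_lower_nth(1)[OF assms] by simp
  finally show ?thesis .
qed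

lemma det_unit_lower_congruence:
  "strict_lower (L :: real^'n::{finite,linorder}^'n::{finite,linorder}) \<Longrightarrow>
    det ((mat 1 - L) ** A ** transpose (mat 1 - L)) = det A"
  by (simp add: det_mul det_unit_lower)

section \<open>The factorization \<open>(I - L) D\<^sup>-\<^sup>1 (I - L)\<^sup>T\<close>\<close>

lemma ldl_diagm_unique:
  fixes L L' :: "real^'n::{finite,linorder}^'n::{finite,linorder}"
  assumes L: "strict_lower L" and L': "strict_lower L'" and e: "\<And>i. e i > 0"
    and eq: "(mat 1 - L) ** diagm e ** transpose (mat 1 - L) = (mat 1 - L') ** diagm e' ** transpose (mat 1 - L')"
  shows "L = L'" "e = e'"
proof -
  define M M' where "M = mat 1 - L" and "M' = mat 1 - L'"
  have entries: "(\<Sum>j\<in>UNIV. M$i$j * e j * M$k$j) = (\<Sum>j\<in>UNIV. M'$i$j * e' j * M'$k$j)" for i k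
    using arg_cong[OF eq, of "\<lambda>X. X$i$k"] by (simp add: matrix_mul_diagm_transpose_nth M_def M'_def)
  have split: "(\<Sum>j\<in>UNIV. X$i$j * f j * X$k$j) = (\<Sum>j\<in>{j. j < k}. X$i$j * f j * X$k$j) + X$i$k * f k"
    if "strict_lower Y" "X = mat 1 - Y" for X Y i k and f :: "'n \<Rightarrow> real"
    using unit_lower_nth[OF that(1)] by (simp add: sum_UNIV_split_at[of _ k] that(2))
  \<comment> \<open>Column \<open>k\<close> of the product only involves columns \<open>\<le> k\<close> of the factor, so both are
    determined column by column.\<close>
  have column: "e k = e' k \<and> (\<forall>i. M$i$k = M'$i$k)" for k
  proof (induction k rule: finite_linorder_induct)
    case (1 k)
    have "(\<Sum>j\<in>{j. j < k}. M$i$j * e j * M$k$j) = (\<Sum>j\<in>{j. j < k}. M'$i$j * e' j * M'$k$j)" for i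
      using 1 by (intro sum.cong) auto
    hence key: "M$i$k * e k = M'$i$k * e' k" for i
      using entries[of i k] split[OF L M_def, where i=i and k=k and f=e]
        split[OF L' M'_def, where i=i and k=k and f=e'] by simp
    have "e k = e' k" using key[of k] unit_lower_nth(1)[OF L] unit_lower_nth(1)[OF L'] by (simp add: M_def M'_def)
    moreover have "M$i$k = M'$i$k" for i using key[of i] \<open>e k = e' k\<close> e[of k] by simp
    ultimately show ?case by blast
  qed
  show "L = L'" using column by (simp add: vec_eq_iff M_def M'_def)
  show "e = e'" using column by blast
qed

lemma ldl_unique:
  fixes L L' D D' :: "real^'n::{finite,linorder}^'n::{finite,linorder}"
  assumes "strict_lower L" "pos_diag D" "strict_lower L'" "pos_diag D'"
    and "(mat 1 - L) ** matrix_inv D ** transpose (mat 1 - L) = (mat 1 - L') ** matrix_inv D' ** transpose (mat 1 - L')"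
  shows "L = L'" "D = D'"
proof -
  have eq: "(mat 1 - L) ** diagm (\<lambda>i. 1 / D$i$i) ** transpose (mat 1 - L)
      = (mat 1 - L') ** diagm (\<lambda>i. 1 / D'$i$i) ** transpose (mat 1 - L')"
    using assms(5) by (simp only: matrix_inv_pos_diag[OF assms(2)] matrix_inv_pos_diag[OF assms(4)])
  have pos: "\<And>i. 1 / D$i$i > 0" using assms(2) by (simp add: pos_diag_def)
  note diag_unique = ldl_diagm_unique[OF assms(1,3) pos eq]
  show "L = L'" by (rule diag_unique(1))
  have "D$i$i = D'$i$i" for i using fun_cong[OF diag_unique(2), of i] by simp
  thus "D = D'" by (subst pos_diag_eq_diagm[OF assms(2)], subst pos_diag_eq_diagm[OF assms(4)]) simp
qed

lemma inner_matrix_symmetric: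
  fixes T :: "real^'n^'n"
  assumes "transpose T = T"
  shows "x \<bullet> (T *v y) = y \<bullet> (T *v x)"
proof -
  have "T$i$j = T$j$i" for i j using arg_cong[OF assms, of "\<lambda>X. X$j$i"] by (simp add: transpose_def)
  hence "(\<Sum>i\<in>UNIV. \<Sum>j\<in>UNIV. x$i * T$i$j * y$j) = (\<Sum>j\<in>UNIV. \<Sum>i\<in>UNIV. y$j * T$j$i * x$i)"
    by (subst sum.swap) (simp add: mult_ac)
  thus ?thesis by (simp add: inner_vec_def matrix_vector_mult_def sum_distrib_left mult.assoc)
qed

lemma exists_conjugate_unit_column:
  fixes T :: "real^'n::{finite,linorder}^'n::{finite,linorder}"
  assumes pd: "\<forall>x. x \<noteq> 0 \<longrightarrow> x \<bullet> (T *v x) > 0"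
  shows "\<exists>c. c$k = 1 \<and> (\<forall>i. i < k \<longrightarrow> c$i = 0) \<and> (\<forall>i. k < i \<longrightarrow> (T *v c)$i = 0)"
proof -
  \<comment> \<open>The correction \<open>c - axis k 1\<close> solves a system with the rows of \<open>T\<close> below \<open>k\<close> and those of
    the identity elsewhere, which is nonsingular since \<open>z \<bullet> (T *v z) = 0\<close> on its kernel.\<close>
  define G :: "real^'n::{finite,linorder}^'n::{finite,linorder}"
    where "G = (\<chi> i j. if k < i then T$i$j else (if i = j then 1 else 0))"
  have Gv: "(G *v x)$i = (if k < i then (T *v x)$i else x$i)" for x i
    by (simp add: G_def matrix_vector_mult_def if_distrib[where f="\<lambda>a. a * _"] cong: if_cong)
  have "inj ((*v) G)"
  proof (rule injI)
    fix x y assume "G *v x = G *v y"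
    define z where "z = x - y"
    have "G *v z = 0" using \<open>G *v x = G *v y\<close> by (simp add: z_def matrix_vector_mult_diff_distrib)
    hence "z$i * (T *v z)$i = 0" for i
      using arg_cong[of "G *v z" 0 "\<lambda>v. v$i"] Gv[of z i] by (cases "k < i") auto
    hence "z \<bullet> (T *v z) = 0" unfolding inner_vec_def inner_real_def by (intro sum.neutral) blast
    thus "x = y" using pd[rule_format, of z] by (auto simp: z_def)
  qed
  then obtain H where "H ** G = mat 1" using matrix_left_invertible_injective by blast
  hence GH: "G ** H = mat 1" using matrix_left_right_inverse by blast
  define x where "x = H *v (\<chi> i. if k < i then - T$i$k else 0)"
  have Gx: "(G *v x)$i = (if k < i then - T$i$k else 0)" for i
    by (simp add: x_def matrix_vector_mul_assoc GH)
  have Tk: "(T *v axis k 1)$i = T$i$k" for i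
    by (simp add: matrix_vector_mult_def axis_def if_distrib[where f="\<lambda>a. _ * a"] cong: if_cong)
  have upper: "x$i = 0" if "\<not> k < i" for i using Gx[of i] Gv[of x i] that by simp
  have lower: "(T *v x)$i = - T$i$k" if "k < i" for i using Gx[of i] Gv[of x i] that by simp
  have "(axis k 1 + x)$k = 1" and "\<forall>i. i < k \<longrightarrow> (axis k 1 + x)$i = 0"
    and "\<forall>i. k < i \<longrightarrow> (T *v (axis k 1 + x))$i = 0"
    using upper lower Tk by (auto simp: axis_def matrix_vector_right_distrib)
  thus ?thesis by blast
qed

lemma exists_ldl_matrix_inv:
  fixes T :: "real^'n::{finite,linorder}^'n::{finite,linorder}"
  assumes sym: "transpose T = T" and pd: "\<forall>x. x \<noteq> 0 \<longrightarrow> x \<bullet> (T *v x) > 0"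
  obtains L D where "strict_lower L" "pos_diag D"
    "matrix_inv T = (mat 1 - L) ** matrix_inv D ** transpose (mat 1 - L)"
proof -
  obtain C where C: "\<And>k. C k $ k = 1" "\<And>k i. i < k \<Longrightarrow> C k $ i = 0" "\<And>k i. k < i \<Longrightarrow> (T *v C k)$i = 0"
    using exists_conjugate_unit_column[OF pd] by metis
  \<comment> \<open>\<open>C j\<close> vanishes above \<open>j\<close> and \<open>T *v C l\<close> below \<open>l\<close>, so \<open>M\<^sup>T T M\<close> is upper and, by symmetry, diagonal.\<close>
  define M :: "real^'n::{finite,linorder}^'n::{finite,linorder}" where "M = (\<chi> i j. C j $ i)"
  define D where "D = transpose M ** T ** M"
  have L: "strict_lower (mat 1 - M)"
    using C(1,2) by (auto simp: strict_lower_def M_def mat_def)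
  have D_nth: "D$j$l = C j \<bullet> (T *v C l)" for j l
  proof -
    have "(\<Sum>m\<in>UNIV. (\<Sum>i\<in>UNIV. C j $ i * T$i$m) * C l $ m) = (\<Sum>i\<in>UNIV. C j $ i * (\<Sum>m\<in>UNIV. T$i$m * C l $ m))"
      by (simp add: sum_distrib_left sum_distrib_right mult.assoc, rule sum.swap)
    thus ?thesis by (simp add: D_def M_def matrix_matrix_mult_def transpose_def inner_vec_def matrix_vector_mult_def)
  qed
  have D_below: "D$j$l = 0" if "l < j" for j l
  proof -
    have "C j $ i * (T *v C l)$i = 0" for i
      using C(2)[of i j] C(3)[of l i] that by (cases "i < j") auto
    thus ?thesis unfolding D_nth inner_vec_def inner_real_def by (intro sum.neutral) blast
  qed
  have D: "pos_diag D"
    unfolding pos_diag_def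
  proof safe
    fix i j :: 'n assume "i \<noteq> j"
    thus "D$i$j = 0"
      using D_below[of i j] D_below[of j i] inner_matrix_symmetric[OF sym, of "C i" "C j"]
      by (cases "j < i") (auto simp: D_nth)
  next
    fix i :: 'n
    have "C i \<noteq> 0" using C(1)[of i] by auto
    thus "D$i$i > 0" using pd by (simp add: D_nth)
  qed
  have "invertible (transpose M)"
    using det_unit_lower[OF L] by (simp add: invertible_det_nz)
  hence MI: "matrix_inv (transpose M) ** transpose M = mat 1" by (rule invertible_matrix_inv)
  have "transpose M ** (T ** (M ** matrix_inv D ** transpose M)) = D ** matrix_inv D ** transpose M"
    by (simp add: D_def matrix_mul_assoc)
  also have "\<dots> = transpose M"
    by (simp add: matrix_inv_pos_diag[OF D] pos_diag_mult_inverse[OF D])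
  finally have "T ** (M ** matrix_inv D ** transpose M) = mat 1"
    using MI by (metis matrix_mul_assoc matrix_mul_lid)
  hence "matrix_inv T = (mat 1 - (mat 1 - M)) ** matrix_inv D ** transpose (mat 1 - (mat 1 - M))"
    by (simp add: matrix_inv_unique)
  with L D show thesis by (rule that)
qed

lemma ldl_factors_eqI:
  assumes "\<pi> permutes UNIV" "strict_lower L" "pos_diag D"
    "perm_act \<pi> (matrix_inv S) = (mat 1 - L) ** matrix_inv D ** transpose (mat 1 - L)"
  shows "ldl_factors S \<pi> = (L, D)"
  unfolding ldl_factors_def
proof (rule the1_equality)
  show "\<exists>!LD. strict_lower (fst LD) \<and> pos_diag (snd LD) \<and>
      perm_act \<pi> (matrix_inv S) = (mat 1 - fst LD) ** matrix_inv (snd LD) ** transpose (mat 1 - fst LD)"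
  proof (rule ex1I[of _ "(L, D)"])
    fix LD assume "strict_lower (fst LD) \<and> pos_diag (snd LD) \<and>
      perm_act \<pi> (matrix_inv S) = (mat 1 - fst LD) ** matrix_inv (snd LD) ** transpose (mat 1 - fst LD)"
    hence L': "strict_lower (fst LD)" and D': "pos_diag (snd LD)"
      and eq: "(mat 1 - fst LD) ** matrix_inv (snd LD) ** transpose (mat 1 - fst LD)
        = (mat 1 - L) ** matrix_inv D ** transpose (mat 1 - L)"
      using assms(4) by auto
    from ldl_unique[OF L' D' assms(2,3) eq] show "LD = (L, D)" by (simp add: prod_eq_iff)
  qed (simp add: assms(2-4))
qed (simp add: assms(2-4))

lemma ldl_factors_spec:
  assumes "pos_def_mat S" "\<pi> permutes UNIV"
  shows "strict_lower (fst (ldl_factors S \<pi>))" "pos_diag (snd (ldl_factors S \<pi>))"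
    "perm_act \<pi> (matrix_inv S) = (mat 1 - fst (ldl_factors S \<pi>)) ** matrix_inv (snd (ldl_factors S \<pi>))
       ** transpose (mat 1 - fst (ldl_factors S \<pi>))"
proof -
  have sym: "transpose S = S" and pd: "\<forall>x. x \<noteq> 0 \<longrightarrow> x \<bullet> (S *v x) > 0"
    using assms(1) by (auto simp: pos_def_mat_def)
  obtain L D where L: "strict_lower L" and D: "pos_diag D"
    and LD: "matrix_inv (perm_act \<pi> S) = (mat 1 - L) ** matrix_inv D ** transpose (mat 1 - L)"
    using exists_ldl_matrix_inv[of "perm_act \<pi> S"] pos_def_perm_act[OF assms(2) pd] sym
    by (metis perm_act_transpose)
  have "matrix_inv (perm_act \<pi> S) = perm_act \<pi> (matrix_inv S)"
    using perm_act_matrix_inv[OF invertible_if_pos_def[OF pd] assms(2)] by simp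
  with LD have "ldl_factors S \<pi> = (L, D)"
    using ldl_factors_eqI[OF assms(2) L D] by simp
  with L D LD \<open>matrix_inv (perm_act \<pi> S) = perm_act \<pi> (matrix_inv S)\<close>
  show "strict_lower (fst (ldl_factors S \<pi>))" "pos_diag (snd (ldl_factors S \<pi>))"
    "perm_act \<pi> (matrix_inv S) = (mat 1 - fst (ldl_factors S \<pi>)) ** matrix_inv (snd (ldl_factors S \<pi>))
       ** transpose (mat 1 - fst (ldl_factors S \<pi>))"
    by simp_all
qed

lemma unit_lower_gram_unique:
  fixes L N :: "real^'n::{finite,linorder}^'n::{finite,linorder}"
  assumes L: "strict_lower L" and N: "\<And>k. N$k$k = 1"
    and eq: "(mat 1 - L) ** transpose (mat 1 - L) = N ** transpose N"
  shows "N = mat 1 - L"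
proof -
  define M where "M = mat 1 - L"
  have M_diag: "M$k$k = 1" and M_upper: "k < j \<Longrightarrow> M$k$j = 0" for k j
    using unit_lower_nth[OF L] by (auto simp: M_def)
  have gram: "(\<Sum>l\<in>UNIV. M$k$l * M$j$l) = (\<Sum>l\<in>UNIV. N$k$l * N$j$l)" for j k
    using arg_cong[OF eq, of "\<lambda>X. X$k$j"] by (simp add: matrix_mul_transpose_nth M_def)
  have rows: "\<forall>l. N$k$l = M$k$l" for k
  proof (induction k rule: finite_linorder_induct)
    case (1 k)
    note earlier_rows = 1
    have left: "M$k$j = N$k$j" if "j < k" for j
      using that
    proof (induction j rule: finite_linorder_induct)
      case (1 j)
      \<comment> \<open>Row \<open>k\<close> of \<open>M - N\<close> is orthogonal to row \<open>j\<close> of \<open>M\<close>, which ends with the diagonal entry \<open>1\<close>.\<close>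
      have "(\<Sum>l\<in>UNIV. (M$k$l - N$k$l) * M$j$l) = 0"
        using gram[where j=j and k=k] earlier_rows[OF \<open>j < k\<close>]
        by (simp add: left_diff_distrib sum_subtractf)
      moreover have "(\<Sum>l\<in>{l. l < j}. (M$k$l - N$k$l) * M$j$l) = 0"
        using 1 by (intro sum.neutral) auto
      moreover have "(\<Sum>l\<in>{l. j < l}. (M$k$l - N$k$l) * M$j$l) = 0"
        using M_upper by (intro sum.neutral) auto
      ultimately show ?case by (simp add: sum_UNIV_split_at[of _ j] M_diag)
    qed
    have "(\<Sum>l\<in>{l. l < k}. M$k$l * M$k$l) + 1 + 0
        = (\<Sum>l\<in>{l. l < k}. N$k$l * N$k$l) + 1 + (\<Sum>l\<in>{l. k < l}. N$k$l * N$k$l)"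
      using gram[of k k] M_upper by (simp add: sum_UNIV_split_at[of _ k] M_diag N)
    moreover have "(\<Sum>l\<in>{l. l < k}. M$k$l * M$k$l) = (\<Sum>l\<in>{l. l < k}. N$k$l * N$k$l)"
      using left by (intro sum.cong) auto
    ultimately have "(\<Sum>l\<in>{l. k < l}. N$k$l * N$k$l) = 0" by simp
    hence right: "N$k$l = 0" if "k < l" for l
      using sum_nonneg_eq_0_iff[of "{l. k < l}" "\<lambda>l. N$k$l * N$k$l"] that by simp
    show ?case
    proof
      fix l
      show "N$k$l = M$k$l"
        using left[of l] right[of l] M_upper[of k l] M_diag[of k] N[of k] by (cases l k rule: linorder_cases) auto
    qed
  qed
  show ?thesis using rows by (simp add: vec_eq_iff M_def)
qed

section \<open>Equal-variance linear structural equation models\<close>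

lemma dag_diag_zero: "is_dag_mat B \<Longrightarrow> B$i$i = 0"
  by (auto simp: is_dag_mat_def acyclic_def)

lemma dag_exists_perm_strict_lower:
  fixes B :: "real^'n::{finite,linorder}^'n::{finite,linorder}"
  assumes "is_dag_mat B"
  obtains \<pi> where "\<pi> permutes UNIV" "strict_lower (perm_act \<pi> B)"
proof (rule acyclic_exists_topological_permutes[of "{(i, j). B$i$j \<noteq> 0}"])
  show "acyclic {(i, j). B$i$j \<noteq> 0}" using assms by (simp add: is_dag_mat_def)
next
  fix \<sigma> :: "'n \<Rightarrow> 'n"
  assume \<sigma>: "\<sigma> permutes UNIV" "\<And>a b. (a, b) \<in> {(i, j). B$i$j \<noteq> 0} \<Longrightarrow> \<sigma> b < \<sigma> a"
  have "strict_lower (perm_act (inv \<sigma>) B)"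
    unfolding strict_lower_def perm_act_def
    using \<sigma>(2)[of "inv \<sigma> _" "inv \<sigma> _"] by (auto simp: permutes_inverses(1)[OF \<sigma>(1)] not_less[symmetric])
  with permutes_inv[OF \<sigma>(1)] show thesis by (rule that)
qed

lemma det_id_minus_dag:
  fixes B :: "real^'n::{finite,linorder}^'n::{finite,linorder}"
  assumes "is_dag_mat B"
  shows "det (mat 1 - B) = 1"
proof -
  obtain \<pi> where \<pi>: "\<pi> permutes UNIV" "strict_lower (perm_act \<pi> B)"
    using dag_exists_perm_strict_lower[OF assms] .
  have "det (mat 1 - B) = det (mat 1 - perm_act \<pi> B)"
    using det_perm_act[OF \<pi>(1), of "mat 1 - B"] by (simp add: perm_act_diff perm_act_mat \<pi>(1))
  also have "\<dots> = 1" by (rule det_unit_lower[OF \<pi>(2)])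
  finally show ?thesis .
qed

lemma ldl_factors_topological:
  fixes S B :: "real^'n::{finite,linorder}^'n::{finite,linorder}"
  assumes "\<pi> permutes UNIV" "strict_lower (perm_act \<pi> B)" "c > 0"
    and "matrix_inv S = (mat 1 - B) ** mat (1/c) ** transpose (mat 1 - B)"
  shows "ldl_factors S \<pi> = (perm_act \<pi> B, mat c)"
proof (rule ldl_factors_eqI[OF assms(1,2)])
  show "pos_diag (mat c :: real^'n::{finite,linorder}^'n::{finite,linorder})"
    using assms(3) by (simp add: pos_diag_def mat_def)
  show "perm_act \<pi> (matrix_inv S)
      = (mat 1 - perm_act \<pi> B) ** matrix_inv (mat c) ** transpose (mat 1 - perm_act \<pi> B)"
    using assms(3) by (simp add: assms(1,4) perm_act_id_minus_congruence matrix_inv_mat)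
qed

lemma snd_ldl_factors_min_trace:
  fixes S B :: "real^'n::{finite,linorder}^'n::{finite,linorder}"
  assumes S: "pos_def_mat S" and B: "is_dag_mat B" and c: "c > 0"
    and S_inv: "matrix_inv S = (mat 1 - B) ** mat (1/c) ** transpose (mat 1 - B)"
    and min: "min_trace_perm S \<pi>0"
  shows "snd (ldl_factors S \<pi>0) = mat c"
proof -
  define D where "D = snd (ldl_factors S \<pi>0)"
  have \<pi>0: "\<pi>0 permutes UNIV" using min by (simp add: min_trace_perm_def)
  have D: "pos_diag D" unfolding D_def by (rule ldl_factors_spec(2)[OF S \<pi>0])
  obtain \<pi>1 where \<pi>1: "\<pi>1 permutes UNIV" "strict_lower (perm_act \<pi>1 B)"
    using dag_exists_perm_strict_lower[OF B] .
  have "trace D = trace (Omega_tilde S \<pi>0)"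
    by (simp add: Omega_tilde_def D_def trace_perm_act permutes_inv[OF \<pi>0])
  also have "\<dots> \<le> trace (Omega_tilde S \<pi>1)" using min \<pi>1(1) by (simp add: min_trace_perm_def)
  also have "\<dots> = CARD('n) * c"
    using ldl_factors_topological[OF \<pi>1 c S_inv]
    by (simp add: Omega_tilde_def trace_perm_act permutes_inv[OF \<pi>1(1)] perm_act_mat)
      (simp add: trace_def mat_def)
  finally have "(\<Sum>i\<in>UNIV. D$i$i) \<le> CARD('n) * c" by (simp add: trace_def)
  moreover have "(\<Prod>i\<in>UNIV. D$i$i) = c ^ CARD('n)"
  proof -
    have "det (matrix_inv D) = det (perm_act \<pi>0 (matrix_inv S))"
      by (simp add: ldl_factors_spec(3)[OF S \<pi>0] det_unit_lower_congruence ldl_factors_spec(1)[OF S \<pi>0] D_def)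
    also have "\<dots> = det (mat (1/c) :: real^'n::{finite,linorder}^'n::{finite,linorder})"
      by (simp add: det_perm_act[OF \<pi>0] S_inv det_mul det_id_minus_dag[OF B])
    finally have "(\<Prod>i\<in>UNIV. 1 / D$i$i) = (1/c) ^ CARD('n)"
      by (simp add: matrix_inv_pos_diag[OF D] det_diagm mat_eq_diagm)
    thus ?thesis by (simp add: prod_dividef power_one_over)
  qed
  ultimately have "D$i$i = c" for i
    using arith_geom_mean_eq_const[where e="\<lambda>i. D$i$i" and c=c] D c by (simp add: pos_diag_def)
  thus ?thesis
    by (subst D_def[symmetric], subst pos_diag_eq_diagm[OF D]) (simp add: mat_eq_diagm)
qed

lemma ldl_factors_min_trace:
  fixes S B :: "real^'n::{finite,linorder}^'n::{finite,linorder}"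
  assumes S: "pos_def_mat S" and B: "is_dag_mat B" and c: "c > 0"
    and S_inv: "matrix_inv S = (mat 1 - B) ** mat (1/c) ** transpose (mat 1 - B)"
    and min: "min_trace_perm S \<pi>0"
  shows "ldl_factors S \<pi>0 = (perm_act \<pi>0 B, mat c)"
proof -
  define L where "L = fst (ldl_factors S \<pi>0)"
  have \<pi>0: "\<pi>0 permutes UNIV" using min by (simp add: min_trace_perm_def)
  have D: "snd (ldl_factors S \<pi>0) = mat c" by (rule snd_ldl_factors_min_trace[OF assms])
  have "(1/c) *\<^sub>R ((mat 1 - L) ** transpose (mat 1 - L))
      = (1/c) *\<^sub>R ((mat 1 - perm_act \<pi>0 B) ** transpose (mat 1 - perm_act \<pi>0 B))"
    using ldl_factors_spec(3)[OF S \<pi>0] c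
    by (simp add: D L_def S_inv perm_act_id_minus_congruence[OF \<pi>0] matrix_inv_mat
        matrix_mul_mat_transpose[symmetric])
  hence "(mat 1 - L) ** transpose (mat 1 - L) = (mat 1 - perm_act \<pi>0 B) ** transpose (mat 1 - perm_act \<pi>0 B)"
    using c by simp
  moreover have "(mat 1 - perm_act \<pi>0 B)$k$k = 1" for k
    using dag_diag_zero[OF B] by (simp add: perm_act_def mat_def)
  ultimately have "mat 1 - perm_act \<pi>0 B = mat 1 - L"
    using unit_lower_gram_unique[of L] ldl_factors_spec(1)[OF S \<pi>0] by (simp add: L_def)
  thus ?thesis using D by (simp add: L_def prod_eq_iff)
qed

theorem lemma3:
  fixes S B0 :: "(real^('n::{finite,linorder}))^('n::{finite,linorder})" and \<omega>0 :: real
  assumes "pos_def_mat S"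
    and "is_dag_mat B0"
    and "\<omega>0 > 0"
    and "S = transpose (matrix_inv (mat 1 - B0)) ** mat (\<omega>0 ^ 2) ** matrix_inv (mat 1 - B0)"
  shows "\<forall>\<pi>0. min_trace_perm S \<pi>0 \<longrightarrow> B_tilde S \<pi>0 = B0"
proof (intro allI impI)
  fix \<pi>0 assume min: "min_trace_perm S \<pi>0"
  have "invertible (mat 1 - B0)"
    using det_id_minus_dag[OF assms(2)] by (simp add: invertible_det_nz)
  hence "matrix_inv S = (mat 1 - B0) ** mat (1 / \<omega>0 ^ 2) ** transpose (mat 1 - B0)"
    using assms(3,4) by (simp add: matrix_inv_congruence)
  hence "ldl_factors S \<pi>0 = (perm_act \<pi>0 B0, mat (\<omega>0 ^ 2))"
    using ldl_factors_min_trace[OF assms(1,2) _ _ min] assms(3) by simp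
  thus "B_tilde S \<pi>0 = B0"
    using min by (simp add: B_tilde_def min_trace_perm_def perm_act_inv_perm_act)
qed

end
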